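(* Fix $h\in\mathbb N$. Letting $n$ range over $\mathbb N^+$ and $u,v$ over $\mathfrak S_n$, there are only finitely many isomorphism classes of $h$-flipclasses.
   Context: $\mathfrak S_n$ is the symmetric group on $[n]$, $T$ its transpositions, $\ell$ the length w.r.t. simple transpositions. The Bruhat graph $B(\mathfrak S_n)$ has an edge $x\xrightarrow{t}y$ iff $yx^{-1}=t\in T$ and $\ell(x)<\ell(y)$; $P_h(u,v)$ is the set of paths $u=x_0\to\cdots\to x_h=v$ of length $h$. Between two fixed vertices there are $0$ or $2$ paths of length $2$, each the flip of the other; the $i$-th flip operator $f_i$ ($i\in[h-1]$) on $P_h(u,v)$ replaces $x_{i-1}\to x_i\to x_{i+1}$ by its flip; an $h$-flipclass of $\mathfrak S_n$ is an orbit of $\langle f_1,\dots,f_{h-1}\rangle$ on some $P_h(u,v)$. Isomorphism: for an $h$-flipclass $F$ of $\mathfrak S_n$ and an $h$-flipclass $F'$ of $\mathfrak S_m$, an isomorphism from $F$ to $F'$ is a pair $(f,g)$ where $f$ is a bijection from the set of permutations occurring on paths of $F$ onto that for $F'$ such that applying $f$ vertexwise gives a bijection $F\to F'$ commuting with the flip operators; $g$ is a bijection from the set of transpositions labelling edges of paths of $F$ onto that for $F'$ such that if $\Gamma\in F$ has label sequence $(t_1,\dots,t_h)$ then its image has label sequence $(g(t_1),\dots,g(t_h))$; and $g$ is order-preserving for the lexicographic orders on transpositions ($(a,b)<(c,d)$, with $a<b$, $c<d$, iff $a<c$, or $a=c$ and $b<d$). *)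

theory Defs
  imports "HOL-Combinatorics.Combinatorics"
begin

definition sperm :: "nat \<Rightarrow> (nat \<Rightarrow> nat) set" where
  "sperm n = {p. p permutes {1..n}}"

definition simple_prod :: "nat list \<Rightarrow> nat \<Rightarrow> nat" where
  "simple_prod is = foldr (\<lambda>i p. transpose i (Suc i) \<circ> p) is id"

definition blen :: "nat \<Rightarrow> (nat \<Rightarrow> nat) \<Rightarrow> nat" where
  "blen n p = (LEAST k. \<exists>is. length is = k \<and> set is \<subseteq> {1..<n} \<and> simple_prod is = p)"

definition is_transp :: "nat \<Rightarrow> (nat \<Rightarrow> nat) \<Rightarrow> bool" where
  "is_transp n t \<longleftrightarrow> (\<exists>a b. 1 \<le> a \<and> a < b \<and> b \<le> n \<and> t = transpose a b)"

definition bedge :: "nat \<Rightarrow> (nat \<Rightarrow> nat) \<Rightarrow> (nat \<Rightarrow> nat) \<Rightarrow> bool" where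
  "bedge n x y \<longleftrightarrow> x \<in> sperm n \<and> y \<in> sperm n \<and> is_transp n (y \<circ> inv x) \<and> blen n x < blen n y"

definition bpaths :: "nat \<Rightarrow> nat \<Rightarrow> (nat \<Rightarrow> nat) \<Rightarrow> (nat \<Rightarrow> nat) \<Rightarrow> (nat \<Rightarrow> nat) list set" where
  "bpaths n h u v = {xs. length xs = Suc h \<and> xs ! 0 = u \<and> xs ! h = v \<and>
                         (\<forall>i<h. bedge n (xs ! i) (xs ! Suc i))}"

definition flip_vertex :: "nat \<Rightarrow> (nat \<Rightarrow> nat) \<Rightarrow> (nat \<Rightarrow> nat) \<Rightarrow> (nat \<Rightarrow> nat) \<Rightarrow> (nat \<Rightarrow> nat)" where
  "flip_vertex n x y z = (THE y'. y' \<noteq> y \<and> bedge n x y' \<and> bedge n y' z)"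

definition flip_op :: "nat \<Rightarrow> nat \<Rightarrow> (nat \<Rightarrow> nat) list \<Rightarrow> (nat \<Rightarrow> nat) list" where
  "flip_op n i xs = xs[i := flip_vertex n (xs ! (i - 1)) (xs ! i) (xs ! Suc i)]"

definition flip_rel :: "nat \<Rightarrow> nat \<Rightarrow> (nat \<Rightarrow> nat) \<Rightarrow> (nat \<Rightarrow> nat) \<Rightarrow>
    ((nat \<Rightarrow> nat) list \<times> (nat \<Rightarrow> nat) list) set" where
  "flip_rel n h u v = {(xs, flip_op n i xs) | xs i. xs \<in> bpaths n h u v \<and> 1 \<le> i \<and> i < h}"

text \<open>F is an h-flipclass of S_n: an orbit of the group generated by f_1,...,f_{h-1} on some P_h(u,v).\<close>
definition flipclass :: "nat \<Rightarrow> nat \<Rightarrow> (nat \<Rightarrow> nat) list set \<Rightarrow> bool" where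
  "flipclass n h F \<longleftrightarrow> (\<exists>u v \<Gamma>. u \<in> sperm n \<and> v \<in> sperm n \<and> \<Gamma> \<in> bpaths n h u v \<and>
      F = {\<Gamma>'. (\<Gamma>, \<Gamma>') \<in> (flip_rel n h u v \<union> (flip_rel n h u v)\<inverse>)\<^sup>*})"

text \<open>Transpositions are encoded as pairs (a,b) with a < b; label of the edge x -> y is y x^{-1}.\<close>
definition tlabel :: "(nat \<Rightarrow> nat) \<Rightarrow> (nat \<Rightarrow> nat) \<Rightarrow> nat \<times> nat" where
  "tlabel x y = (THE p. fst p < snd p \<and> y \<circ> inv x = transpose (fst p) (snd p))"

definition label_seq :: "(nat \<Rightarrow> nat) list \<Rightarrow> (nat \<times> nat) list" where
  "label_seq xs = map (\<lambda>i. tlabel (xs ! i) (xs ! Suc i)) [0..<length xs - 1]"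

definition verts :: "(nat \<Rightarrow> nat) list set \<Rightarrow> (nat \<Rightarrow> nat) set" where
  "verts F = (\<Union>xs\<in>F. set xs)"

definition labels :: "(nat \<Rightarrow> nat) list set \<Rightarrow> (nat \<times> nat) set" where
  "labels F = (\<Union>xs\<in>F. set (label_seq xs))"

definition lex_less :: "nat \<times> nat \<Rightarrow> nat \<times> nat \<Rightarrow> bool" where
  "lex_less s t \<longleftrightarrow> fst s < fst t \<or> (fst s = fst t \<and> snd s < snd t)"

definition flip_iso :: "nat \<Rightarrow> nat \<Rightarrow> (nat \<Rightarrow> nat) list set \<Rightarrow> nat \<Rightarrow> (nat \<Rightarrow> nat) list set \<Rightarrow>
    ((nat \<Rightarrow> nat) \<Rightarrow> (nat \<Rightarrow> nat)) \<Rightarrow> (nat \<times> nat \<Rightarrow> nat \<times> nat) \<Rightarrow> bool" where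
  "flip_iso n h F m F' f g \<longleftrightarrow>
     bij_betw f (verts F) (verts F') \<and>
     bij_betw (map f) F F' \<and>
     (\<forall>\<Gamma>\<in>F. \<forall>i. 1 \<le> i \<and> i < h \<longrightarrow> map f (flip_op n i \<Gamma>) = flip_op m i (map f \<Gamma>)) \<and>
     bij_betw g (labels F) (labels F') \<and>
     (\<forall>\<Gamma>\<in>F. label_seq (map f \<Gamma>) = map g (label_seq \<Gamma>)) \<and>
     (\<forall>s\<in>labels F. \<forall>t\<in>labels F. lex_less s t \<longrightarrow> lex_less (g s) (g t))"

end

theory Submission
  imports Defs "HOL-Library.Product_Lexorder"
begin

type_synonym perm = "nat \<Rightarrow> nat"

text \<open>
  The Coxeter length of a permutation is its number of inversions, so \<open>x \<rightarrow> (a b) x\<close> with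
  \<open>a < b\<close> is a Bruhat edge exactly when \<open>a\<close> stands before \<open>b\<close> in \<open>x\<close>. With this criterion
  one checks that a path \<open>x \<rightarrow> y \<rightarrow> z\<close> labelled \<open>(a b), (c d)\<close> has exactly one other middle
  vertex, and that the flipped path is again labelled by transpositions of the letters
  \<open>a, b, c, d\<close>. Hence all paths of a flipclass only move the at most \<open>2h\<close> letters moved along
  one of them, so a flipclass has at most \<open>(4h\<^sup>2)\<^sup>h\<close> elements. Numbering the vertices
  arbitrarily and the labels by lexicographic rank, a flipclass is described up to isomorphism
  by bounded data, and there are only finitely many such descriptions.
\<close>

definition inversions :: "nat \<Rightarrow> perm \<Rightarrow> (nat \<times> nat) set" where
  "inversions n p = {(i, j). 1 \<le> i \<and> i < j \<and> j \<le> n \<and> p j < p i}"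

lemma finite_inversions: "finite (inversions n p)"
  by (rule finite_subset[of _ "{1..n} \<times> {1..n}"]) (auto simp: inversions_def)

lemma permutes_atLeastAtMost_range:
  "p permutes {1..n} \<Longrightarrow> 1 \<le> v \<Longrightarrow> v \<le> n \<Longrightarrow> 1 \<le> p v \<and> p v \<le> n"
  using permutes_in_image[of p "{1..n}" v] by auto

text \<open>
  Keeps pairs ordered, and maps the inversions of \<open>p\<close> injectively into those of
  \<open>transpose (p i) (p j) \<circ> p\<close>.
\<close>
definition swap_pair_positions :: "nat \<Rightarrow> nat \<Rightarrow> nat \<times> nat \<Rightarrow> nat \<times> nat" where
  "swap_pair_positions i j kl =
     (if (fst kl \<in> {i, j} \<and> j < snd kl) \<or> (snd kl \<in> {i, j} \<and> fst kl < i)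
      then (transpose i j (fst kl), transpose i j (snd kl)) else kl)"

lemma swap_pair_positions_involution:
  "i < j \<Longrightarrow> swap_pair_positions i j (swap_pair_positions i j kl) = kl"
  by (cases kl) (auto simp: swap_pair_positions_def transpose_def)

lemma card_inversions_transpose_less:
  assumes p: "p permutes {1..n}" and ij: "1 \<le> i" "i < j" "j \<le> n" "p i < p j"
  shows "card (inversions n p) < card (inversions n (transpose (p i) (p j) \<circ> p))"
proof -
  define y where "y = transpose (p i) (p j) \<circ> p"
  have "inj p" using p permutes_inj by blast
  then have yi: "y i = p j" and yj: "y j = p i" and ym: "\<And>m. m \<noteq> i \<Longrightarrow> m \<noteq> j \<Longrightarrow> y m = p m"
    using ij by (auto simp: y_def inj_eq)
  let ?psi = "swap_pair_positions i j"
  have inj_psi: "inj ?psi"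
    by (metis injI swap_pair_positions_involution[OF ij(2)])
  have sub: "?psi ` inversions n p \<subseteq> inversions n y - {(i, j)}"
  proof
    fix x assume "x \<in> ?psi ` inversions n p"
    then obtain k l where kl: "(k, l) \<in> inversions n p" "x = ?psi (k, l)" by auto
    then show "x \<in> inversions n y - {(i, j)}"
      using ij yi yj ym unfolding inversions_def swap_pair_positions_def
      by (auto simp: transpose_def split: if_splits) (metis less_trans nat_neq_iff)+
  qed
  have "(i, j) \<in> inversions n y" using ij yi yj by (auto simp: inversions_def)
  then have "card (?psi ` inversions n p) < card (inversions n y)"
    using sub by (intro psubset_card_mono[OF finite_inversions]) blast
  then show ?thesis
    using card_image[OF inj_on_subset[OF inj_psi subset_UNIV]] by (simp add: y_def)
qed

lemma transpose_Suc_less_iff: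
  "{a, b} \<noteq> {v, Suc v} \<Longrightarrow> transpose v (Suc v) a < transpose v (Suc v) b \<longleftrightarrow> a < b"
  by (auto simp: transpose_def)

lemma card_inversions_adjacent_swap:
  assumes p: "p permutes {1..n}" and v: "1 \<le> v" "v < n" and asc: "inv p v < inv p (Suc v)"
  shows "card (inversions n (transpose v (Suc v) \<circ> p)) = Suc (card (inversions n p))"
proof -
  define i where "i = inv p v"
  define j where "j = inv p (Suc v)"
  have pij: "p i = v" "p j = Suc v"
    unfolding i_def j_def using p permutes_inverses(1) by metis+
  have ij: "1 \<le> i" "i < j" "j \<le> n"
    using asc permutes_atLeastAtMost_range[OF permutes_inv[OF p]] v by (auto simp: i_def j_def)
  have "inj p" using p permutes_inj by blast
  have same: "transpose v (Suc v) (p l) < transpose v (Suc v) (p k) \<longleftrightarrow> p l < p k"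
    if "k < l" "(k, l) \<noteq> (i, j)" for k l
  proof (rule transpose_Suc_less_iff)
    have "{l, k} \<noteq> {i, j}" using that ij by (auto simp: doubleton_eq_iff)
    then have "p ` {l, k} \<noteq> p ` {i, j}" using \<open>inj p\<close> by (metis inj_image_eq_iff)
    then show "{p l, p k} \<noteq> {v, Suc v}" by (simp add: pij)
  qed
  have "(k, l) \<in> inversions n (transpose v (Suc v) \<circ> p) \<longleftrightarrow> (k, l) \<in> insert (i, j) (inversions n p)"
    for k l
    by (cases "(k, l) = (i, j)") (use ij same pij in \<open>auto simp: inversions_def\<close>)
  then have "inversions n (transpose v (Suc v) \<circ> p) = insert (i, j) (inversions n p)"
    by auto
  moreover have "(i, j) \<notin> inversions n p" using pij by (simp add: inversions_def)
  ultimately show ?thesis by (simp add: finite_inversions)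
qed

lemma inv_transpose_comp:
  assumes "p permutes S" shows "inv (transpose a b \<circ> p) = inv p \<circ> transpose a b"
proof -
  have "bij p" using assms by (rule permutes_bij)
  then show ?thesis by (simp add: o_inv_distrib)
qed

lemma card_inversions_adjacent_swap_desc:
  assumes p: "p permutes {1..n}" and v: "1 \<le> v" "v < n" and desc: "inv p (Suc v) < inv p v"
  shows "Suc (card (inversions n (transpose v (Suc v) \<circ> p))) = card (inversions n p)"
proof -
  define y where "y = transpose v (Suc v) \<circ> p"
  have y: "y permutes {1..n}"
    unfolding y_def by (rule permutes_compose[OF p permutes_swap_id]) (use v in auto)
  have "inv y v < inv y (Suc v)"
    using desc by (simp add: y_def inv_transpose_comp[OF p])
  moreover have "transpose v (Suc v) \<circ> y = p" by (simp add: y_def flip: comp_assoc)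
  ultimately show ?thesis
    using card_inversions_adjacent_swap[OF y v] by (simp add: y_def)
qed

lemma permutes_ascending_eq_id:
  assumes p: "p permutes {1..n}" and asc: "\<And>v. 1 \<le> v \<Longrightarrow> v < n \<Longrightarrow> p v < p (Suc v)"
  shows "p = id"
proof
  fix v
  have le: "p a \<le> p b" if "1 \<le> a" "a \<le> b" "b \<le> n" for a b
  proof (cases "a = b")
    case False
    then show ?thesis
      using lift_Suc_mono_less_ivl[of "{1..<n}" p a b] asc that by fastforce
  qed simp
  have inj: "inj_on p A" for A using permutes_inj[OF p] by (rule inj_on_subset) simp
  have range: "1 \<le> p a \<and> p a \<le> n" if "a \<in> {1..n}" for a
    using permutes_atLeastAtMost_range[OF p] that by simp
  show "p v = id v"
  proof (cases "v \<in> {1..n}")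
    case True
    have "p ` {1..v} \<subseteq> {1..p v}" using True le range by (intro image_subsetI) auto
    from card_mono[OF _ this] have "v \<le> p v" by (simp add: card_image[OF inj])
    moreover have "p ` {v..n} \<subseteq> {p v..n}" using True le range by (intro image_subsetI) auto
    from card_mono[OF _ this] have "Suc n - v \<le> Suc n - p v" by (simp add: card_image[OF inj])
    ultimately show ?thesis using True range[of v] by simp
  next
    case False
    then show ?thesis using p by (simp add: permutes_not_in)
  qed
qed

lemma permutes_adjacent_descent:
  assumes p: "p permutes {1..n}" and "p \<noteq> id"
  obtains v where "1 \<le> v" "v < n" "inv p (Suc v) < inv p v"
proof -
  have "inv p \<noteq> id"
  proof
    assume "inv p = id"
    then have "inv (inv p) = id" by simp
    then show False using permutes_inv_inv[OF p] assms(2) by simp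
  qed
  then have "\<not> (\<forall>v. 1 \<le> v \<and> v < n \<longrightarrow> inv p v < inv p (Suc v))"
    using permutes_ascending_eq_id[OF permutes_inv[OF p]] by blast
  then obtain v where v: "1 \<le> v" "v < n" "\<not> inv p v < inv p (Suc v)" by blast
  moreover have "inv p v \<noteq> inv p (Suc v)"
    using permutes_inj[OF permutes_inv[OF p]] by (simp add: inj_eq)
  ultimately show thesis using that by simp
qed

lemma simple_prod_Cons: "simple_prod (v # w) = transpose v (Suc v) \<circ> simple_prod w"
  by (simp add: simple_prod_def)

lemma simple_prod_permutes: "set w \<subseteq> {1..<n} \<Longrightarrow> simple_prod w permutes {1..n}"
proof (induction w)
  case Nil
  show ?case unfolding simple_prod_def using permutes_id by (simp add: id_def)
next
  case (Cons v w)
  then have "transpose v (Suc v) permutes {1..n}" by (intro permutes_swap_id) auto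
  moreover have "simple_prod w permutes {1..n}" using Cons by simp
  ultimately show ?case unfolding simple_prod_Cons by (rule permutes_compose[rotated])
qed

lemma card_inversions_simple_prod_le:
  "set w \<subseteq> {1..<n} \<Longrightarrow> card (inversions n (simple_prod w)) \<le> length w"
proof (induction w)
  case Nil
  have "inversions n id = {}" by (auto simp: inversions_def)
  then show ?case unfolding simple_prod_def by (simp add: id_def)
next
  case (Cons v w)
  define q where "q = simple_prod w"
  have q: "q permutes {1..n}" using Cons.prems simple_prod_permutes q_def by auto
  have v: "1 \<le> v" "v < n" using Cons.prems by auto
  have IH: "card (inversions n q) \<le> length w" using Cons q_def by auto
  have "inv q v \<noteq> inv q (Suc v)"
    using permutes_inj[OF permutes_inv[OF q]] by (simp add: inj_eq)
  then have "card (inversions n (transpose v (Suc v) \<circ> q)) \<le> Suc (card (inversions n q))"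
    using card_inversions_adjacent_swap[OF q v] card_inversions_adjacent_swap_desc[OF q v]
    by (cases "inv q v < inv q (Suc v)") auto
  then show ?case using IH unfolding simple_prod_Cons q_def[symmetric] length_Cons by linarith
qed

lemma exists_simple_word_inversions:
  "p permutes {1..n} \<Longrightarrow>
     \<exists>w. length w = card (inversions n p) \<and> set w \<subseteq> {1..<n} \<and> simple_prod w = p"
proof (induction "card (inversions n p)" arbitrary: p rule: less_induct)
  case less
  show ?case
  proof (cases "p = id")
    case True
    have "inversions n id = {}" by (auto simp: inversions_def)
    then show ?thesis using True by (intro exI[of _ "[]"]) (simp add: simple_prod_def id_def)
  next
    case False
    then obtain v where v: "1 \<le> v" "v < n" "inv p (Suc v) < inv p v"
      using permutes_adjacent_descent[OF less.prems] by blast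
    define q where "q = transpose v (Suc v) \<circ> p"
    have q: "q permutes {1..n}"
      unfolding q_def by (rule permutes_compose[OF less.prems permutes_swap_id]) (use v in auto)
    have card: "Suc (card (inversions n q)) = card (inversions n p)"
      using card_inversions_adjacent_swap_desc[OF less.prems v] by (simp add: q_def)
    then obtain w where w: "length w = card (inversions n q)" "set w \<subseteq> {1..<n}" "simple_prod w = q"
      using less.hyps[OF _ q] by auto
    have "simple_prod (v # w) = p" by (simp add: simple_prod_Cons w(3) q_def flip: comp_assoc)
    then show ?thesis using w v card by (intro exI[of _ "v # w"]) auto
  qed
qed

lemma blen_eq_card_inversions: "p permutes {1..n} \<Longrightarrow> blen n p = card (inversions n p)"
  unfolding blen_def
  by (rule Least_equality) (use exists_simple_word_inversions card_inversions_simple_prod_le in blast)+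

lemma transpose_comp_in_sperm:
  "x \<in> sperm n \<Longrightarrow> a \<in> {1..n} \<Longrightarrow> b \<in> {1..n} \<Longrightarrow> transpose a b \<circ> x \<in> sperm n"
  unfolding sperm_def by (auto intro!: permutes_compose permutes_swap_id)

lemma bedge_transpose_iff_less:
  assumes x: "x \<in> sperm n" and ab: "1 \<le> a" "a < b" "b \<le> n"
  shows "bedge n x (transpose a b \<circ> x) \<longleftrightarrow> inv x a < inv x b"
proof -
  have xp: "x permutes {1..n}" using x by (simp add: sperm_def)
  define y where "y = transpose a b \<circ> x"
  have y: "y \<in> sperm n" unfolding y_def using x ab by (intro transpose_comp_in_sperm) auto
  have "y \<circ> inv x = transpose a b"
    unfolding y_def by (simp add: comp_assoc permutes_inv_o(1)[OF xp])
  then have "is_transp n (y \<circ> inv x)" using ab unfolding is_transp_def by blast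
  then have bedge_iff: "bedge n x y \<longleftrightarrow> card (inversions n x) < card (inversions n y)"
    using x y by (simp add: bedge_def sperm_def blen_eq_card_inversions)
  define i where "i = inv x a"
  define j where "j = inv x b"
  have xij: "x i = a" "x j = b" unfolding i_def j_def using xp permutes_inverses(1) by metis+
  have ij: "1 \<le> i" "i \<le> n" "1 \<le> j" "j \<le> n" "i \<noteq> j"
    using permutes_atLeastAtMost_range[OF permutes_inv[OF xp]] ab xij unfolding i_def j_def by auto
  show ?thesis
  proof (cases "i < j")
    case True
    then have "card (inversions n x) < card (inversions n y)"
      using card_inversions_transpose_less[OF xp, of i j] ij ab xij by (simp add: y_def)
    then show ?thesis using True bedge_iff unfolding y_def[symmetric] i_def[symmetric] j_def[symmetric] by simp
  next
    case False
    have yp: "y permutes {1..n}" using y by (simp add: sperm_def)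
    have yji: "y j = a" "y i = b" using xij by (auto simp: y_def)
    have "card (inversions n y) < card (inversions n (transpose (y j) (y i) \<circ> y))"
      using card_inversions_transpose_less[OF yp, of j i] False ij ab yji by simp
    also have "transpose (y j) (y i) \<circ> y = x"
      unfolding yji by (simp add: y_def flip: comp_assoc)
    finally show ?thesis
      using False bedge_iff unfolding y_def[symmetric] i_def[symmetric] j_def[symmetric] by simp
  qed
qed

lemma bedge_transpose_iff:
  assumes x: "x \<in> sperm n" and ab: "a \<in> {1..n}" "b \<in> {1..n}" "a \<noteq> b"
  shows "bedge n x (transpose a b \<circ> x) \<longleftrightarrow> (a < b \<longleftrightarrow> inv x a < inv x b)"
proof (cases "a < b")
  case True
  then show ?thesis using bedge_transpose_iff_less[OF x] ab by simp
next
  case False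
  have "inj (inv x)" using x permutes_inj permutes_inv by (metis mem_Collect_eq sperm_def)
  then have "inv x a \<noteq> inv x b" using ab(3) by (simp add: inj_eq)
  then show ?thesis
    using False bedge_transpose_iff_less[OF x, of b a] ab by (auto simp: transpose_commute)
qed

lemma bedgeE:
  assumes "bedge n x y"
  obtains a b where "1 \<le> a" "a < b" "b \<le> n" "y = transpose a b \<circ> x"
proof -
  obtain a b where ab: "1 \<le> a" "a < b" "b \<le> n" "y \<circ> inv x = transpose a b"
    using assms unfolding bedge_def is_transp_def by blast
  have "x permutes {1..n}" using assms by (simp add: bedge_def sperm_def)
  then have "y = (y \<circ> inv x) \<circ> x" by (simp add: comp_assoc permutes_inv_o(2))
  then show thesis using that ab by metis
qed

lemma transpose_comp_factor_letter:
  assumes "p \<noteq> q"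
    and eq: "transpose c d \<circ> transpose a b = transpose r s \<circ> transpose p q"
    and nid: "transpose c d \<circ> transpose a b \<noteq> id"
  shows "p \<in> {a, b, c, d}"
proof (rule ccontr)
  assume p: "p \<notin> {a, b, c, d}"
  then have "(transpose r s \<circ> transpose p q) p = p" by (simp flip: eq)
  then have "transpose r s q = p" by simp
  then have "transpose r s = transpose p q"
    using \<open>p \<noteq> q\<close> by (auto simp: transpose_def fun_eq_iff split: if_splits)
  then show False using eq nid by simp
qed

lemma transpose_comp_factor_letters:
  assumes "p \<noteq> q"
    and eq: "transpose c d \<circ> transpose a b = transpose r s \<circ> transpose p q"
    and nid: "transpose c d \<circ> transpose a b \<noteq> id"
  shows "p \<in> {a, b, c, d}" "q \<in> {a, b, c, d}"
proof -
  show "p \<in> {a, b, c, d}" by (rule transpose_comp_factor_letter[OF assms])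
  show "q \<in> {a, b, c, d}"
    using transpose_comp_factor_letter[of q p] assms by (simp add: transpose_commute)
qed

lemma transpose_comp_disjoint_factors:
  assumes "distinct [a, b, c, d]"
    and pq: "p \<in> {a, b, c, d}" "q \<in> {a, b, c, d}" "p \<noteq> q"
    and eq: "transpose c d \<circ> transpose a b = transpose r s \<circ> transpose p q"
  shows "transpose p q = transpose a b \<or> transpose p q = transpose c d"
proof -
  have dist: "a \<noteq> b" "a \<noteq> c" "a \<noteq> d" "b \<noteq> c" "b \<noteq> d" "c \<noteq> d"
    using assms(1) by auto
  have e: "\<And>k. transpose c d (transpose a b k) = transpose r s (transpose p q k)"
    using eq by (metis comp_apply)
  have ea: "transpose c d (transpose a b a) = transpose r s (transpose p q a)" by (rule e)
  have eb: "transpose c d (transpose a b b) = transpose r s (transpose p q b)" by (rule e)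
  have ec: "transpose c d (transpose a b c) = transpose r s (transpose p q c)" by (rule e)
  have ed: "transpose c d (transpose a b d) = transpose r s (transpose p q d)" by (rule e)
  show ?thesis
    using pq dist ea eb ec ed transpose_commute[of a b] transpose_commute[of c d]
    by (auto simp: transpose_def split: if_splits)
qed

lemma middle_vertex_letters:
  assumes "bedge n x w" "bedge n w z"
    and z: "z = transpose c d \<circ> transpose a b \<circ> x"
    and nid: "transpose c d \<circ> transpose a b \<noteq> id"
  obtains p q r s where "p < q" "p \<in> {a, b, c, d}" "q \<in> {a, b, c, d}" "w = transpose p q \<circ> x"
    "transpose c d \<circ> transpose a b = transpose r s \<circ> transpose p q"
proof -
  obtain p q where pq: "1 \<le> p" "p < q" "q \<le> n" "w = transpose p q \<circ> x"
    by (rule bedgeE[OF assms(1)])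
  obtain r s where rs: "1 \<le> r" "r < s" "s \<le> n" "z = transpose r s \<circ> w"
    by (rule bedgeE[OF assms(2)])
  have xp: "x permutes {1..n}" using assms(1) by (simp add: bedge_def sperm_def)
  have "transpose c d \<circ> transpose a b = z \<circ> inv x"
    using z by (simp add: comp_assoc permutes_inv_o(1)[OF xp])
  also have "\<dots> = transpose r s \<circ> transpose p q"
    using rs(4) pq(4) by (simp add: comp_assoc permutes_inv_o(1)[OF xp])
  finally have eq: "transpose c d \<circ> transpose a b = transpose r s \<circ> transpose p q" .
  have "p \<noteq> q" using pq(2) by simp
  from transpose_comp_factor_letters[OF this eq nid] show thesis
    using that pq(2,4) eq by blast
qed

lemma transpose_comp_ne_id:
  assumes "a \<noteq> b" "b \<notin> {c, d}"
  shows "transpose c d \<circ> transpose a b \<noteq> id"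
proof
  assume "transpose c d \<circ> transpose a b = id"
  then have "transpose c d (transpose a b a) = a" by (metis comp_apply id_apply)
  then show False using assms by simp
qed

lemma transpose_comp_permutes_ne:
  assumes "x permutes S" "transpose a b k \<noteq> transpose c d k"
  shows "transpose a b \<circ> x \<noteq> transpose c d \<circ> x"
proof
  assume "transpose a b \<circ> x = transpose c d \<circ> x"
  then have "transpose a b (x (inv x k)) = transpose c d (x (inv x k))" by (metis comp_apply)
  then show False using assms by (simp add: permutes_inverses(1))
qed

lemma bruhat_square_disjoint:
  assumes x: "x \<in> sperm n" and abcd: "{a, b, c, d} \<subseteq> {1..n}" "distinct [a, b, c, d]"
    and y: "y = transpose a b \<circ> x" and z: "z = transpose c d \<circ> y"
    and xy: "bedge n x y" and yz: "bedge n y z"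
  shows "\<exists>y'. y' \<noteq> y \<and> {w. bedge n x w \<and> bedge n w z} = {y, y'} \<and>
     (\<exists>p q r s. {p, q, r, s} \<subseteq> {a, b, c, d} \<and> y' = transpose p q \<circ> x \<and> z = transpose r s \<circ> y')"
proof -
  have xp: "x permutes {1..n}" using x by (simp add: sperm_def)
  define y' where "y' = transpose c d \<circ> x"
  have y_sperm: "y \<in> sperm n" and y'_sperm: "y' \<in> sperm n"
    using transpose_comp_in_sperm[OF x] abcd by (auto simp: y y'_def)
  have comm: "transpose c d \<circ> transpose a b = transpose a b \<circ> transpose c d"
    using abcd(2) by (auto simp: fun_eq_iff transpose_def)
  have z_x: "z = transpose c d \<circ> transpose a b \<circ> x" using y z by (simp add: comp_assoc)
  have z_y': "z = transpose a b \<circ> y'" using z_x comm by (simp add: y'_def comp_assoc)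
  have inv_y: "inv y = inv x \<circ> transpose a b" and inv_y': "inv y' = inv x \<circ> transpose c d"
    using inv_transpose_comp[OF xp] by (simp_all add: y y'_def)
  have ab: "a < b \<longleftrightarrow> inv x a < inv x b"
    using xy bedge_transpose_iff[OF x, of a b] abcd by (simp add: y)
  have cd: "c < d \<longleftrightarrow> inv y c < inv y d"
    using yz bedge_transpose_iff[OF y_sperm, of c d] abcd by (simp add: z)
  have xy': "bedge n x y'"
    using bedge_transpose_iff[OF x, of c d] cd abcd by (simp add: y'_def inv_y)
  have y'z: "bedge n y' z"
    using bedge_transpose_iff[OF y'_sperm, of a b] ab abcd by (simp add: z_y' inv_y')
  have nid: "transpose c d \<circ> transpose a b \<noteq> id"
    using abcd(2) by (intro transpose_comp_ne_id) auto
  have "{w. bedge n x w \<and> bedge n w z} \<subseteq> {y, y'}"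
  proof
    fix w assume "w \<in> {w. bedge n x w \<and> bedge n w z}"
    then obtain p q r s where pq: "p < q" "p \<in> {a, b, c, d}" "q \<in> {a, b, c, d}"
      "w = transpose p q \<circ> x" "transpose c d \<circ> transpose a b = transpose r s \<circ> transpose p q"
      using middle_vertex_letters[OF _ _ z_x nid] by blast
    then have "transpose p q = transpose a b \<or> transpose p q = transpose c d"
      using transpose_comp_disjoint_factors[OF abcd(2)] by simp
    then show "w \<in> {y, y'}" using pq(4) by (auto simp: y y'_def)
  qed
  then have middles: "{w. bedge n x w \<and> bedge n w z} = {y, y'}" using xy yz xy' y'z by blast
  have "y' \<noteq> y"
    unfolding y y'_def using abcd(2) by (intro transpose_comp_permutes_ne[OF xp, of _ _ a]) auto
  with middles z_y' show ?thesis by (intro exI[of _ y']) (auto simp: y'_def)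
qed

lemma three_cycle_orders_exclusive:
  fixes a b c A B C :: nat
  assumes "distinct [a, b, c]" "distinct [A, B, C]"
    and "(a < b \<longleftrightarrow> A < B) \<and> (a < c \<longleftrightarrow> B < C)"
  shows "((b < c \<longleftrightarrow> B < C) \<and> (b < a \<longleftrightarrow> C < A)) \<longleftrightarrow>
    \<not> ((c < a \<longleftrightarrow> C < A) \<and> (c < b \<longleftrightarrow> A < B))"
  using assms by (cases "a < b"; cases "b < c"; cases "a < c"; cases "A < B"; cases "B < C"; cases "A < C") auto

lemma three_cycle_middle_cases:
  assumes "bedge n x w" "bedge n w z" and z: "z = transpose a c \<circ> transpose a b \<circ> x"
    and abc: "distinct [a, b, c]"
  shows "w \<in> {transpose a b \<circ> x, transpose b c \<circ> x, transpose c a \<circ> x}"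
proof -
  have nid: "transpose a c \<circ> transpose a b \<noteq> id"
    using abc by (intro transpose_comp_ne_id) auto
  obtain p q r s where pq: "p < q" "p \<in> {a, b, a, c}" "q \<in> {a, b, a, c}" "w = transpose p q \<circ> x"
    by (rule middle_vertex_letters[OF assms(1,2) z nid])
  then have "transpose p q \<in> {transpose a b, transpose b c, transpose c a}"
    by (auto simp: transpose_commute)
  then show ?thesis using pq(4) by auto
qed

text \<open>
  The 3-cycle \<open>(a c)(a b)\<close> also factors as \<open>(b a)(b c)\<close> and as \<open>(c b)(c a)\<close>; if the first
  factorisation is a Bruhat path, exactly one of the other two is.
\<close>
lemma three_cycle_middles_exclusive:
  assumes x: "x \<in> sperm n" and abc: "{a, b, c} \<subseteq> {1..n}" "distinct [a, b, c]"
    and z: "z = transpose a c \<circ> transpose a b \<circ> x"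
    and xy: "bedge n x (transpose a b \<circ> x)" and yz: "bedge n (transpose a b \<circ> x) z"
  shows "bedge n x (transpose b c \<circ> x) \<and> bedge n (transpose b c \<circ> x) z \<longleftrightarrow>
    \<not> (bedge n x (transpose c a \<circ> x) \<and> bedge n (transpose c a \<circ> x) z)"
proof -
  have xp: "x permutes {1..n}" using x by (simp add: sperm_def)
  let ?P = "inv x"
  have sperm: "transpose a b \<circ> x \<in> sperm n" "transpose b c \<circ> x \<in> sperm n" "transpose c a \<circ> x \<in> sperm n"
    using transpose_comp_in_sperm[OF x] abc by auto
  have "transpose a c \<circ> transpose a b = transpose b a \<circ> transpose b c"
    using abc(2) by (auto simp: fun_eq_iff transpose_def)
  then have z2: "z = transpose b a \<circ> (transpose b c \<circ> x)" using z by (simp add: comp_assoc)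
  have "transpose a c \<circ> transpose a b = transpose c b \<circ> transpose c a"
    using abc(2) by (auto simp: fun_eq_iff transpose_def)
  then have z3: "z = transpose c b \<circ> (transpose c a \<circ> x)" using z by (simp add: comp_assoc)
  have "z = transpose a c \<circ> (transpose a b \<circ> x)" using z by (simp add: comp_assoc)
  then have y: "(a < b \<longleftrightarrow> ?P a < ?P b) \<and> (a < c \<longleftrightarrow> ?P b < ?P c)"
    using xy yz bedge_transpose_iff[OF x, of a b] bedge_transpose_iff[OF sperm(1), of a c] abc
    by (simp add: inv_transpose_comp[OF xp])
  have w2: "bedge n x (transpose b c \<circ> x) \<and> bedge n (transpose b c \<circ> x) z \<longleftrightarrow>
      (b < c \<longleftrightarrow> ?P b < ?P c) \<and> (b < a \<longleftrightarrow> ?P c < ?P a)"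
    using bedge_transpose_iff[OF x, of b c] bedge_transpose_iff[OF sperm(2), of b a] abc
    by (simp add: z2 inv_transpose_comp[OF xp])
  have w3: "bedge n x (transpose c a \<circ> x) \<and> bedge n (transpose c a \<circ> x) z \<longleftrightarrow>
      (c < a \<longleftrightarrow> ?P c < ?P a) \<and> (c < b \<longleftrightarrow> ?P a < ?P b)"
    using bedge_transpose_iff[OF x, of c a] bedge_transpose_iff[OF sperm(3), of c b] abc
    by (simp add: z3 inv_transpose_comp[OF xp])
  have "distinct [?P a, ?P b, ?P c]"
    using abc(2) permutes_inj[OF permutes_inv[OF xp]] by (simp add: inj_eq)
  then show ?thesis
    unfolding w2 w3 using three_cycle_orders_exclusive[OF abc(2) _ y] by blast
qed

lemma bruhat_square_three_cycle:
  assumes x: "x \<in> sperm n" and abc: "{a, b, c} \<subseteq> {1..n}" "distinct [a, b, c]"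
    and y: "y = transpose a b \<circ> x" and z: "z = transpose a c \<circ> y"
    and xy: "bedge n x y" and yz: "bedge n y z" and M: "{a, b, c} \<subseteq> M"
  shows "\<exists>y'. y' \<noteq> y \<and> {w. bedge n x w \<and> bedge n w z} = {y, y'} \<and>
     (\<exists>p q r s. {p, q, r, s} \<subseteq> M \<and> y' = transpose p q \<circ> x \<and> z = transpose r s \<circ> y')"
proof -
  have xp: "x permutes {1..n}" using x by (simp add: sperm_def)
  let ?mid = "{w. bedge n x w \<and> bedge n w z}"
  define w2 where "w2 = transpose b c \<circ> x"
  define w3 where "w3 = transpose c a \<circ> x"
  have z_x: "z = transpose a c \<circ> transpose a b \<circ> x" using y z by (simp add: comp_assoc)
  have "?mid \<subseteq> {y, w2, w3}"
    using three_cycle_middle_cases[OF _ _ z_x abc(2)] by (auto simp: y w2_def w3_def)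
  moreover have "y \<in> ?mid" using xy yz by simp
  moreover have "w2 \<in> ?mid \<longleftrightarrow> w3 \<notin> ?mid"
    using three_cycle_middles_exclusive[OF x abc z_x] xy yz by (simp add: y w2_def w3_def)
  moreover have "y \<noteq> w2" "y \<noteq> w3" "w2 \<noteq> w3"
    unfolding y w2_def w3_def using abc(2)
    by (auto intro!: transpose_comp_permutes_ne[OF xp, where k = b])
  ultimately have "?mid = {y, w2} \<and> w2 \<noteq> y \<or> ?mid = {y, w3} \<and> w3 \<noteq> y" by blast
  moreover have "z = transpose b a \<circ> w2" "z = transpose c b \<circ> w3"
    using z_x abc(2) by (auto simp: w2_def w3_def fun_eq_iff transpose_def)
  ultimately show ?thesis
  proof (elim disjE)
    assume "?mid = {y, w2} \<and> w2 \<noteq> y"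
    then show ?thesis using M \<open>z = transpose b a \<circ> w2\<close> by (intro exI[of _ w2]) (auto simp: w2_def)
  next
    assume "?mid = {y, w3} \<and> w3 \<noteq> y"
    then show ?thesis using M \<open>z = transpose c b \<circ> w3\<close> by (intro exI[of _ w3]) (auto simp: w3_def)
  qed
qed

lemma bedge_irrefl: "\<not> bedge n x x"
  by (simp add: bedge_def)

lemma bedge_transpose_ne: "bedge n x (transpose a b \<circ> x) \<Longrightarrow> a \<noteq> b"
  by (auto simp: bedge_irrefl)

lemma bruhat_square:
  assumes x: "x \<in> sperm n" and abcd: "{a, b, c, d} \<subseteq> {1..n}"
    and y: "y = transpose a b \<circ> x" and z: "z = transpose c d \<circ> y"
    and xy: "bedge n x y" and yz: "bedge n y z"
  shows "\<exists>y'. y' \<noteq> y \<and> {w. bedge n x w \<and> bedge n w z} = {y, y'} \<and>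
     (\<exists>p q r s. {p, q, r, s} \<subseteq> {a, b, c, d} \<and> y' = transpose p q \<circ> x \<and> z = transpose r s \<circ> y')"
proof -
  have ab: "a \<noteq> b" using xy y bedge_transpose_ne by blast
  have cd: "c \<noteq> d" using yz z bedge_transpose_ne by blast
  have yba: "y = transpose b a \<circ> x" using y by (simp add: transpose_commute)
  consider "{a, b} = {c, d}" | "distinct [a, b, c, d]"
    | "a = c" "b \<noteq> d" | "a = d" "b \<noteq> c" | "b = c" "a \<noteq> d" | "b = d" "a \<noteq> c"
    using ab cd by auto
  then show ?thesis
  proof cases
    case 1
    then have "transpose c d = transpose a b" using ab by (auto simp: doubleton_eq_iff transpose_commute)
    then have "z = x" using y z by (simp flip: comp_assoc)
    then show ?thesis using xy yz by (auto simp: bedge_def)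
  next
    case 2
    then show ?thesis using bruhat_square_disjoint[OF x abcd _ y z xy yz] by blast
  next
    case 3
    then show ?thesis
      by (intro bruhat_square_three_cycle[OF x _ _ y _ xy yz, where c = d]) (use abcd ab cd z in auto)
  next
    case 4
    then show ?thesis
      by (intro bruhat_square_three_cycle[OF x _ _ y _ xy yz, where c = c])
        (use abcd ab cd z in \<open>auto simp: transpose_commute\<close>)
  next
    case 5
    then show ?thesis
      by (intro bruhat_square_three_cycle[OF x _ _ yba _ xy yz, where c = d]) (use abcd ab cd z in auto)
  next
    case 6
    then show ?thesis
      by (intro bruhat_square_three_cycle[OF x _ _ yba _ xy yz, where c = c])
        (use abcd ab cd z in \<open>auto simp: transpose_commute\<close>)
  qed
qed

definition bpaths_on :: "nat set \<Rightarrow> nat \<Rightarrow> nat \<Rightarrow> perm \<Rightarrow> perm \<Rightarrow> perm list set" where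
  "bpaths_on S n h u v = {G \<in> bpaths n h u v. \<forall>k<h. \<exists>a\<in>S. \<exists>b\<in>S. G ! Suc k = transpose a b \<circ> G ! k}"

lemma flip_vertex_eqI:
  assumes "{w. bedge n x w \<and> bedge n w z} = {y, y'}" "y \<noteq> y'"
  shows "flip_vertex n x y z = y'"
  unfolding flip_vertex_def by (rule the_equality) (use assms in blast)+

lemma list_update_bpaths_on:
  assumes G: "G \<in> bpaths_on S n h u v" and i: "0 < i" "i < h"
    and edges: "bedge n (G ! (i - 1)) y'" "bedge n y' (G ! Suc i)"
    and letters: "{p, q, r, s} \<subseteq> S" "y' = transpose p q \<circ> G ! (i - 1)" "G ! Suc i = transpose r s \<circ> y'"
  shows "G[i := y'] \<in> bpaths_on S n h u v"
proof -
  have len: "length G = Suc h" and G0: "G ! 0 = u" and Gh: "G ! h = v"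
    and edge: "\<And>k. k < h \<Longrightarrow> bedge n (G ! k) (G ! Suc k)"
    and step: "\<And>k. k < h \<Longrightarrow> \<exists>a\<in>S. \<exists>b\<in>S. G ! Suc k = transpose a b \<circ> G ! k"
    using G by (auto simp: bpaths_on_def bpaths_def)
  have nth: "G[i := y'] ! k = (if k = i then y' else G ! k)" for k
    using i len by simp
  have "bedge n (G[i := y'] ! k) (G[i := y'] ! Suc k) \<and>
      (\<exists>a\<in>S. \<exists>b\<in>S. G[i := y'] ! Suc k = transpose a b \<circ> G[i := y'] ! k)" if "k < h" for k
  proof -
    consider "Suc k = i" | "k = i" | "k \<noteq> i" "Suc k \<noteq> i" by blast
    then show ?thesis
    proof cases
      case 1
      then have "k = i - 1" by simp
      then show ?thesis using edges(1) letters 1 unfolding nth by auto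
    next
      case 2
      then show ?thesis using edges(2) letters unfolding nth by auto
    next
      case 3
      then show ?thesis using edge[OF that] step[OF that] unfolding nth by auto
    qed
  qed
  then show ?thesis using i len G0 Gh nth by (simp add: bpaths_on_def bpaths_def)
qed

lemma flip_op_bpaths_on:
  assumes G: "G \<in> bpaths_on S n h u v" and S: "S \<subseteq> {1..n}" and i: "1 \<le> i" "i < h"
  shows "flip_op n i G \<in> bpaths_on S n h u v" "flip_op n i (flip_op n i G) = G"
proof -
  define x where "x = G ! (i - 1)"
  have Suc_i: "Suc (i - 1) = i" using i by simp
  have len: "length G = Suc h" using G by (simp add: bpaths_on_def bpaths_def)
  have edge: "\<And>k. k < h \<Longrightarrow> bedge n (G ! k) (G ! Suc k)"
    using G by (simp add: bpaths_on_def bpaths_def)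
  have step: "\<And>k. k < h \<Longrightarrow> \<exists>a\<in>S. \<exists>b\<in>S. G ! Suc k = transpose a b \<circ> G ! k"
    using G by (simp add: bpaths_on_def)
  have "i - 1 < h" using i by simp
  from step[OF this] obtain a b where ab: "a \<in> S" "b \<in> S" "G ! i = transpose a b \<circ> x"
    unfolding Suc_i x_def by blast
  obtain c d where cd: "c \<in> S" "d \<in> S" "G ! Suc i = transpose c d \<circ> G ! i"
    using step[of i] i by auto
  have xy: "bedge n x (G ! i)" using edge[of "i - 1"] i Suc_i by (simp add: x_def)
  have yz: "bedge n (G ! i) (G ! Suc i)" using edge[of i] i by simp
  have x: "x \<in> sperm n" using xy by (simp add: bedge_def)
  have "{a, b, c, d} \<subseteq> {1..n}" using ab cd S by auto
  from bruhat_square[OF x this ab(3) cd(3) xy yz]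
  obtain y' p q r s where y': "y' \<noteq> G ! i" "{w. bedge n x w \<and> bedge n w (G ! Suc i)} = {G ! i, y'}"
    and letters: "{p, q, r, s} \<subseteq> {a, b, c, d}" "y' = transpose p q \<circ> x" "G ! Suc i = transpose r s \<circ> y'"
    by (elim exE conjE) (rule that)
  have flip: "flip_op n i G = G[i := y']"
    unfolding flip_op_def x_def[symmetric] using flip_vertex_eqI[OF y'(2)] y'(1) by simp
  have "y' \<in> {w. bedge n x w \<and> bedge n w (G ! Suc i)}" using y'(2) by simp
  then have edges: "bedge n (G ! (i - 1)) y'" "bedge n y' (G ! Suc i)" by (simp_all add: x_def)
  have "{p, q, r, s} \<subseteq> S" using letters(1) ab cd by blast
  from list_update_bpaths_on[OF G _ i(2) edges this letters(2)[unfolded x_def] letters(3)]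
  show "flip_op n i G \<in> bpaths_on S n h u v" unfolding flip using i by simp
  have "{w. bedge n x w \<and> bedge n w (G ! Suc i)} = {y', G ! i}"
    using y'(2) by (simp add: insert_commute)
  then have "flip_vertex n x y' (G ! Suc i) = G ! i"
    using flip_vertex_eqI y'(1) by metis
  then have "flip_op n i (G[i := y']) = G"
    unfolding flip_op_def using i len by (simp add: x_def)
  then show "flip_op n i (flip_op n i G) = G" by (simp add: flip)
qed

lemma bedge_step_moved:
  assumes "bedge n x y"
  obtains a b where "1 \<le> a" "a < b" "b \<le> n" "y = transpose a b \<circ> x"
    "{c. (y \<circ> inv x) c \<noteq> c} = {a, b}"
proof -
  obtain a b where ab: "1 \<le> a" "a < b" "b \<le> n" "y = transpose a b \<circ> x"
    by (rule bedgeE[OF assms])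
  have "x permutes {1..n}" using assms by (simp add: bedge_def sperm_def)
  then have "y \<circ> inv x = transpose a b" using ab(4) by (simp add: comp_assoc permutes_inv_o(1))
  then have "{c. (y \<circ> inv x) c \<noteq> c} = {a, b}" using ab(2) by (auto simp: transpose_def)
  with ab show thesis by (rule that)
qed

lemma bpaths_eq_bpaths_on: "bpaths n h u v = bpaths_on {1..n} n h u v"
proof
  show "bpaths n h u v \<subseteq> bpaths_on {1..n} n h u v"
  proof
    fix G assume G: "G \<in> bpaths n h u v"
    have "\<exists>a\<in>{1..n}. \<exists>b\<in>{1..n}. G ! Suc k = transpose a b \<circ> G ! k" if "k < h" for k
    proof -
      have "bedge n (G ! k) (G ! Suc k)" using G that by (simp add: bpaths_def)
      then obtain a b where ab: "1 \<le> a" "a < b" "b \<le> n" "G ! Suc k = transpose a b \<circ> G ! k"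
        by (rule bedgeE)
      then have "a \<in> {1..n}" "b \<in> {1..n}" by auto
      with ab(4) show ?thesis by blast
    qed
    with G show "G \<in> bpaths_on {1..n} n h u v" by (simp add: bpaths_on_def)
  qed
qed (auto simp: bpaths_on_def)

definition path_support :: "nat \<Rightarrow> perm list \<Rightarrow> nat set" where
  "path_support h G = (\<Union>k<h. {a. (G ! Suc k \<circ> inv (G ! k)) a \<noteq> a})"

lemma bpaths_path_support:
  assumes G: "G \<in> bpaths n h u v"
  shows "G \<in> bpaths_on (path_support h G) n h u v" "path_support h G \<subseteq> {1..n}"
    "finite (path_support h G)" "card (path_support h G) \<le> 2 * h"
proof -
  define M where "M k = {c. (G ! Suc k \<circ> inv (G ! k)) c \<noteq> c}" for k
  have supp: "path_support h G = (\<Union>k<h. M k)" by (simp add: path_support_def M_def)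
  have step: "\<exists>a b. 1 \<le> a \<and> a < b \<and> b \<le> n \<and> G ! Suc k = transpose a b \<circ> G ! k \<and> M k = {a, b}"
    if "k < h" for k
  proof -
    have "bedge n (G ! k) (G ! Suc k)" using G that by (simp add: bpaths_def)
    then show ?thesis unfolding M_def by (rule bedge_step_moved) blast
  qed
  have "\<exists>a\<in>path_support h G. \<exists>b\<in>path_support h G. G ! Suc k = transpose a b \<circ> G ! k"
    if k: "k < h" for k
  proof -
    obtain a b where ab: "G ! Suc k = transpose a b \<circ> G ! k" "M k = {a, b}"
      using step[OF k] by blast
    have "M k \<subseteq> path_support h G" unfolding supp using k by blast
    with ab show ?thesis by blast
  qed
  with G show "G \<in> bpaths_on (path_support h G) n h u v" by (simp add: bpaths_on_def)
  have M: "M k \<subseteq> {1..n}" "finite (M k)" "card (M k) \<le> 2" if "k < h" for k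
    using step[OF that] by (auto simp: card_insert_if)
  show "path_support h G \<subseteq> {1..n}" unfolding supp using M(1) by blast
  show "finite (path_support h G)" unfolding supp using M(2) by blast
  have "card (path_support h G) \<le> (\<Sum>k<h. card (M k))"
    unfolding supp by (rule card_UN_le) simp
  also have "\<dots> \<le> (\<Sum>k<h. 2)" using M(3) by (intro sum_mono) simp
  finally show "card (path_support h G) \<le> 2 * h" by simp
qed

definition flip_orbit :: "nat \<Rightarrow> nat \<Rightarrow> perm \<Rightarrow> perm \<Rightarrow> perm list \<Rightarrow> perm list set" where
  "flip_orbit n h u v \<Gamma> = {\<Gamma>'. (\<Gamma>, \<Gamma>') \<in> (flip_rel n h u v \<union> (flip_rel n h u v)\<inverse>)\<^sup>*}"

lemma flip_orbit_subset_bpaths_on: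
  assumes \<Gamma>: "\<Gamma> \<in> bpaths_on S n h u v" and S: "S \<subseteq> {1..n}"
  shows "flip_orbit n h u v \<Gamma> \<subseteq> bpaths_on S n h u v"
proof
  fix G assume "G \<in> flip_orbit n h u v \<Gamma>"
  then have "(\<Gamma>, G) \<in> (flip_rel n h u v \<union> (flip_rel n h u v)\<inverse>)\<^sup>*" by (simp add: flip_orbit_def)
  then show "G \<in> bpaths_on S n h u v"
  proof (induction rule: rtrancl_induct)
    case base
    then show ?case by (fact \<Gamma>)
  next
    case (step G1 G2)
    from step.hyps(2) show ?case
    proof
      assume "(G1, G2) \<in> flip_rel n h u v"
      then obtain i where "G2 = flip_op n i G1" "1 \<le> i" "i < h" by (auto simp: flip_rel_def)
      then show ?case using flip_op_bpaths_on(1)[OF step.IH S] by simp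
    next
      assume "(G1, G2) \<in> (flip_rel n h u v)\<inverse>"
      then obtain i where i: "G1 = flip_op n i G2" "G2 \<in> bpaths_on {1..n} n h u v" "1 \<le> i" "i < h"
        by (auto simp: flip_rel_def bpaths_eq_bpaths_on)
      then have "G2 = flip_op n i G1" using flip_op_bpaths_on(2)[OF i(2) _ i(3,4)] by simp
      then show ?case using flip_op_bpaths_on(1)[OF step.IH S i(3,4)] by simp
    qed
  qed
qed

lemma flip_op_in_flip_orbit:
  assumes "\<Gamma> \<in> bpaths n h u v" "G \<in> flip_orbit n h u v \<Gamma>" "1 \<le> i" "i < h"
  shows "flip_op n i G \<in> flip_orbit n h u v \<Gamma>"
proof -
  have "G \<in> bpaths_on {1..n} n h u v"
    using flip_orbit_subset_bpaths_on[of \<Gamma> "{1..n}" n h u v] assms(1,2)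
    by (auto simp: bpaths_eq_bpaths_on)
  then have "G \<in> bpaths n h u v" by (simp add: bpaths_eq_bpaths_on)
  then have "(G, flip_op n i G) \<in> flip_rel n h u v" using assms(3,4) by (auto simp: flip_rel_def)
  then show ?thesis using assms(2) unfolding flip_orbit_def by (auto intro: rtrancl_into_rtrancl)
qed

definition path_steps :: "nat \<Rightarrow> perm list \<Rightarrow> perm list" where
  "path_steps h G = map (\<lambda>k. G ! Suc k \<circ> inv (G ! k)) [0..<h]"

lemma bpaths_step_eq:
  assumes "G \<in> bpaths n h u v" "k < h"
  shows "G ! Suc k = (G ! Suc k \<circ> inv (G ! k)) \<circ> G ! k"
proof -
  have "G ! k permutes {1..n}" using assms by (simp add: bpaths_def bedge_def sperm_def)
  then show ?thesis by (simp add: comp_assoc permutes_inv_o(2))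
qed

lemma path_steps_inj:
  assumes G1: "G1 \<in> bpaths n h u v" and G2: "G2 \<in> bpaths n h u v"
    and eq: "path_steps h G1 = path_steps h G2"
  shows "G1 = G2"
proof (rule nth_equalityI)
  show "length G1 = length G2" using G1 G2 by (simp add: bpaths_def)
  have steps: "G1 ! Suc k \<circ> inv (G1 ! k) = G2 ! Suc k \<circ> inv (G2 ! k)" if "k < h" for k
    using arg_cong[OF eq, of "\<lambda>xs. xs ! k"] that by (simp add: path_steps_def)
  have "G1 ! k = G2 ! k" if "k \<le> h" for k
    using that
  proof (induction k)
    case 0
    then show ?case using G1 G2 by (simp add: bpaths_def)
  next
    case (Suc k)
    then have k: "k < h" by simp
    have "G1 ! Suc k = (G1 ! Suc k \<circ> inv (G1 ! k)) \<circ> G1 ! k" by (rule bpaths_step_eq[OF G1 k])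
    also have "\<dots> = (G2 ! Suc k \<circ> inv (G2 ! k)) \<circ> G2 ! k" using steps[OF k] Suc by simp
    also have "\<dots> = G2 ! Suc k" by (rule bpaths_step_eq[OF G2 k, symmetric])
    finally show ?case .
  qed
  then show "G1 ! k = G2 ! k" if "k < length G1" for k
    using that G1 by (simp add: bpaths_def)
qed

lemma card_bpaths_on_le:
  assumes S: "finite S"
  shows "finite (bpaths_on S n h u v) \<and> card (bpaths_on S n h u v) \<le> (card S * card S) ^ h"
proof -
  define T where "T = (\<lambda>(a, b). transpose a b) ` (S \<times> S)"
  define L where "L = {ts. set ts \<subseteq> T \<and> length ts = h}"
  have finT: "finite T" and cardT: "card T \<le> card S * card S"
    unfolding T_def using S card_image_le[of "S \<times> S"] by (auto simp: card_cartesian_product)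
  have "path_steps h G \<in> L" if G: "G \<in> bpaths_on S n h u v" for G
  proof -
    have "G ! Suc k \<circ> inv (G ! k) \<in> T" if k: "k < h" for k
    proof -
      obtain a b where ab: "a \<in> S" "b \<in> S" "G ! Suc k = transpose a b \<circ> G ! k"
        using G k by (auto simp: bpaths_on_def)
      have "G ! k permutes {1..n}" using G k by (simp add: bpaths_on_def bpaths_def bedge_def sperm_def)
      then have "G ! Suc k \<circ> inv (G ! k) = transpose a b"
        using ab(3) by (simp add: comp_assoc permutes_inv_o(1))
      then show ?thesis unfolding T_def using ab(1,2) by force
    qed
    then show ?thesis by (auto simp: L_def path_steps_def)
  qed
  then have sub: "path_steps h ` bpaths_on S n h u v \<subseteq> L" by blast
  have inj: "inj_on (path_steps h) (bpaths_on S n h u v)"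
    by (rule inj_onI) (auto simp: bpaths_on_def intro: path_steps_inj)
  have finL: "finite L" unfolding L_def using finT by (rule finite_lists_length_eq)
  have "card (bpaths_on S n h u v) \<le> card L"
    using card_inj_on_le[OF inj sub finL] .
  also have "\<dots> = card T ^ h" unfolding L_def using finT by (rule card_lists_length_eq)
  also have "\<dots> \<le> (card S * card S) ^ h" using cardT by (rule power_mono) simp
  finally show ?thesis using finite_imageD[OF finite_subset[OF sub finL] inj] by simp
qed

lemma flipclass_eq_flip_orbit:
  "flipclass n h F \<longleftrightarrow>
     (\<exists>u v \<Gamma>. u \<in> sperm n \<and> v \<in> sperm n \<and> \<Gamma> \<in> bpaths n h u v \<and>
        F = flip_orbit n h u v \<Gamma>)"
  by (simp add: flipclass_def flip_orbit_def)

lemma flipclass_finite_card_le: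
  assumes "flipclass n h F"
  shows "finite F \<and> card F \<le> (4 * h * h) ^ h"
proof -
  obtain u v \<Gamma> where \<Gamma>: "\<Gamma> \<in> bpaths n h u v" and F: "F = flip_orbit n h u v \<Gamma>"
    using assms by (auto simp: flipclass_eq_flip_orbit)
  define S where "S = path_support h \<Gamma>"
  note supp = bpaths_path_support[OF \<Gamma>, folded S_def]
  have sub: "F \<subseteq> bpaths_on S n h u v"
    unfolding F by (rule flip_orbit_subset_bpaths_on[OF supp(1,2)])
  have "card S * card S \<le> (2 * h) * (2 * h)" using supp(4) by (intro mult_mono) auto
  then have "(card S * card S) ^ h \<le> (4 * h * h) ^ h" by (intro power_mono) auto
  then show ?thesis
    using card_bpaths_on_le[OF supp(3)] sub by (meson card_mono finite_subset le_trans)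
qed

lemma flipclass_length:
  assumes "flipclass n h F" "G \<in> F"
  shows "length G = Suc h"
proof -
  obtain u v \<Gamma> where \<Gamma>: "\<Gamma> \<in> bpaths n h u v" and F: "F = flip_orbit n h u v \<Gamma>"
    using assms by (auto simp: flipclass_eq_flip_orbit)
  have "G \<in> bpaths_on {1..n} n h u v"
    using flip_orbit_subset_bpaths_on[of \<Gamma> "{1..n}" n h u v] \<Gamma> assms(2) F
    by (auto simp: bpaths_eq_bpaths_on)
  then show ?thesis by (simp add: bpaths_on_def bpaths_def)
qed

lemma flipclass_flip_op:
  assumes "flipclass n h F" "G \<in> F" "1 \<le> i" "i < h"
  shows "flip_op n i G \<in> F"
  using assms flip_op_in_flip_orbit by (fastforce simp: flipclass_eq_flip_orbit)

lemma flipclass_verts_bound: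
  assumes "flipclass n h F"
  shows "finite (verts F) \<and> card (verts F) \<le> Suc h * (4 * h * h) ^ h"
proof -
  have F: "finite F" "card F \<le> (4 * h * h) ^ h" using flipclass_finite_card_le[OF assms] by auto
  have "card (verts F) \<le> (\<Sum>G\<in>F. card (set G))" unfolding verts_def by (rule card_UN_le[OF F(1)])
  also have "\<dots> \<le> (\<Sum>G\<in>F. Suc h)"
    using flipclass_length[OF assms] by (intro sum_mono) (metis card_length)
  also have "\<dots> = Suc h * card F" by simp
  also have "\<dots> \<le> Suc h * (4 * h * h) ^ h" using F(2) by (rule mult_le_mono2)
  finally show ?thesis using F(1) by (simp add: verts_def)
qed

lemma length_label_seq: "length (label_seq G) = length G - 1"
  by (simp add: label_seq_def)

lemma flipclass_labels_bound:
  assumes "flipclass n h F"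
  shows "finite (labels F) \<and> card (labels F) \<le> h * (4 * h * h) ^ h"
proof -
  have F: "finite F" "card F \<le> (4 * h * h) ^ h" using flipclass_finite_card_le[OF assms] by auto
  have "card (labels F) \<le> (\<Sum>G\<in>F. card (set (label_seq G)))" unfolding labels_def by (rule card_UN_le[OF F(1)])
  also have "\<dots> \<le> (\<Sum>G\<in>F. h)"
    using flipclass_length[OF assms] by (intro sum_mono) (metis card_length length_label_seq diff_Suc_1)
  also have "\<dots> = h * card F" by simp
  also have "\<dots> \<le> h * (4 * h * h) ^ h" using F(2) by (rule mult_le_mono2)
  finally show ?thesis using F(1) by (simp add: labels_def)
qed

lemma lex_less_iff_less: "lex_less s t \<longleftrightarrow> s < t"
  by (cases s; cases t) (auto simp: lex_less_def)

definition rank_in :: "'a::linorder set \<Rightarrow> 'a \<Rightarrow> nat" where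
  "rank_in A x = card {y \<in> A. y < x}"

lemma rank_in_less_iff:
  assumes "finite A" "x \<in> A" "y \<in> A"
  shows "rank_in A x < rank_in A y \<longleftrightarrow> x < y"
proof
  assume "x < y"
  then have "{z \<in> A. z < x} \<subset> {z \<in> A. z < y}" using assms(2) by auto
  then show "rank_in A x < rank_in A y" unfolding rank_in_def using assms(1) by (simp add: psubset_card_mono)
next
  assume "rank_in A x < rank_in A y"
  moreover have "rank_in A y \<le> rank_in A x" if "y \<le> x"
    unfolding rank_in_def using assms(1) that by (intro card_mono) auto
  ultimately show "x < y" by force
qed

lemma bij_betw_rank_in:
  assumes "finite A"
  shows "bij_betw (rank_in A) A {0..<card A}"
proof -
  have inj: "inj_on (rank_in A) A"
    by (rule inj_onI) (metis assms rank_in_less_iff linorder_neq_iff less_irrefl)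
  have "rank_in A x < card A" if "x \<in> A" for x
    unfolding rank_in_def using assms that by (intro psubset_card_mono) auto
  then have "rank_in A ` A \<subseteq> {0..<card A}" by auto
  then have "rank_in A ` A = {0..<card A}"
    by (rule card_subset_eq[rotated]) (simp_all add: card_image[OF inj])
  then show ?thesis using inj by (simp add: bij_betw_def)
qed

definition vertex_code :: "perm list set \<Rightarrow> perm \<Rightarrow> nat" where
  "vertex_code F = (SOME E. bij_betw E (verts F) {0..<card (verts F)})"

lemma bij_betw_vertex_code:
  assumes "finite (verts F)"
  shows "bij_betw (vertex_code F) (verts F) {0..<card (verts F)}"
  unfolding vertex_code_def by (rule someI_ex[OF ex_bij_betw_finite_nat[OF assms]])

definition flip_type :: "nat \<Rightarrow> nat \<Rightarrow> perm list set \<Rightarrow>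
    nat \<times> nat \<times> (nat list \<times> nat list \<times> nat list list) set" where
  "flip_type n h F = (card (verts F), card (labels F),
     (\<lambda>G. (map (vertex_code F) G, map (rank_in (labels F)) (label_seq G),
           map (\<lambda>i. map (vertex_code F) (flip_op n i G)) [1..<h])) ` F)"

lemma flip_type_partner:
  assumes "flip_type n h F = flip_type m h F'" "G \<in> F"
  obtains G' where "G' \<in> F'" "map (vertex_code F') G' = map (vertex_code F) G"
    "map (rank_in (labels F')) (label_seq G') = map (rank_in (labels F)) (label_seq G)"
    "\<And>i. 1 \<le> i \<Longrightarrow> i < h \<Longrightarrow> map (vertex_code F') (flip_op m i G') = map (vertex_code F) (flip_op n i G)"
proof -
  from assms obtain G' where G': "G' \<in> F'"
    "(map (vertex_code F) G, map (rank_in (labels F)) (label_seq G),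
      map (\<lambda>i. map (vertex_code F) (flip_op n i G)) [1..<h]) =
     (map (vertex_code F') G', map (rank_in (labels F')) (label_seq G'),
      map (\<lambda>i. map (vertex_code F') (flip_op m i G')) [1..<h])"
    unfolding flip_type_def by (metis (no_types, lifting) image_iff prod.inject)
  then show thesis by (intro that[of G']) (auto simp: map_eq_conv)
qed

lemma flipclass_codes:
  assumes "flipclass n h F"
  shows "bij_betw (vertex_code F) (verts F) {0..<card (verts F)}"
    "bij_betw (rank_in (labels F)) (labels F) {0..<card (labels F)}"
  using bij_betw_vertex_code bij_betw_rank_in flipclass_verts_bound[OF assms] flipclass_labels_bound[OF assms]
  by blast+

definition vertex_transfer :: "perm list set \<Rightarrow> perm list set \<Rightarrow> perm \<Rightarrow> perm" where
  "vertex_transfer F F' = inv_into (verts F') (vertex_code F') \<circ> vertex_code F"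

definition label_transfer :: "perm list set \<Rightarrow> perm list set \<Rightarrow> nat \<times> nat \<Rightarrow> nat \<times> nat" where
  "label_transfer F F' = inv_into (labels F') (rank_in (labels F')) \<circ> rank_in (labels F)"

lemma map_inv_into_comp_eq:
  assumes "bij_betw E' V' W" "set xs' \<subseteq> V'" "map E' xs' = map E xs"
  shows "map (inv_into V' E' \<circ> E) xs = xs'"
proof -
  have "map (inv_into V' E' \<circ> E) xs = map (inv_into V' E') (map E' xs')"
    by (simp add: assms(3) flip: map_map)
  also have "\<dots> = xs'"
    using assms(1,2) by (auto simp: bij_betw_def map_idI subset_iff inv_into_f_f)
  finally show ?thesis .
qed

context
  fixes n m h :: nat and F F' :: "perm list set"
  assumes F: "flipclass n h F" and F': "flipclass m h F'"
    and eq: "flip_type n h F = flip_type m h F'"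
begin

lemma card_verts_labels_eq: "card (verts F') = card (verts F)" "card (labels F') = card (labels F)"
  using eq by (simp_all add: flip_type_def)

lemma flipclass_codes':
  "bij_betw (vertex_code F') (verts F') {0..<card (verts F)}"
  "bij_betw (rank_in (labels F')) (labels F') {0..<card (labels F)}"
  using flipclass_codes[OF F'] by (simp_all add: card_verts_labels_eq)

lemma bij_betw_vertex_transfer: "bij_betw (vertex_transfer F F') (verts F) (verts F')"
  unfolding vertex_transfer_def
  by (rule bij_betw_trans[OF flipclass_codes(1)[OF F] bij_betw_inv_into[OF flipclass_codes'(1)]])

lemma bij_betw_label_transfer: "bij_betw (label_transfer F F') (labels F) (labels F')"
  unfolding label_transfer_def
  by (rule bij_betw_trans[OF flipclass_codes(2)[OF F] bij_betw_inv_into[OF flipclass_codes'(2)]])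

lemma label_transfer_lex_less:
  assumes st: "s \<in> labels F" "t \<in> labels F" "lex_less s t"
  shows "lex_less (label_transfer F F' s) (label_transfer F F' t)"
proof -
  let ?R = "rank_in (labels F)" and ?R' = "rank_in (labels F')"
  have fin: "finite (labels F)" "finite (labels F')" using flipclass_labels_bound F F' by blast+
  have rank_transfer: "?R' (label_transfer F F' r) = ?R r" if "r \<in> labels F" for r
    using flipclass_codes'(2) bij_betw_apply[OF flipclass_codes(2)[OF F] that] unfolding label_transfer_def
    by (simp add: bij_betw_def f_inv_into_f)
  have "?R s < ?R t" using st rank_in_less_iff[OF fin(1)] by (simp add: lex_less_iff_less)
  then have "?R' (label_transfer F F' s) < ?R' (label_transfer F F' t)" using st rank_transfer by simp
  then show ?thesis
    using rank_in_less_iff[OF fin(2)] bij_betw_apply[OF bij_betw_label_transfer] st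
    by (simp add: lex_less_iff_less)
qed

lemma vertex_transfer_path:
  assumes G: "G \<in> F"
  shows "map (vertex_transfer F F') G \<in> F'"
    "label_seq (map (vertex_transfer F F') G) = map (label_transfer F F') (label_seq G)"
    "1 \<le> i \<Longrightarrow> i < h \<Longrightarrow>
       map (vertex_transfer F F') (flip_op n i G) = flip_op m i (map (vertex_transfer F F') G)"
proof -
  note E' = flipclass_codes'(1) and R' = flipclass_codes'(2)
  obtain G' where G': "G' \<in> F'" "map (vertex_code F') G' = map (vertex_code F) G"
    "map (rank_in (labels F')) (label_seq G') = map (rank_in (labels F)) (label_seq G)"
    "\<And>i. 1 \<le> i \<Longrightarrow> i < h \<Longrightarrow>
       map (vertex_code F') (flip_op m i G') = map (vertex_code F) (flip_op n i G)"
    using flip_type_partner[OF eq G] by blast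
  have verts': "set G'' \<subseteq> verts F'" if "G'' \<in> F'" for G'' using that by (auto simp: verts_def)
  have fG: "map (vertex_transfer F F') G = G'"
    unfolding vertex_transfer_def by (rule map_inv_into_comp_eq[OF E' verts'[OF G'(1)] G'(2)])
  then show "map (vertex_transfer F F') G \<in> F'" using G'(1) by simp
  have "map (label_transfer F F') (label_seq G) = label_seq G'"
    unfolding label_transfer_def using G'(1)
    by (intro map_inv_into_comp_eq[OF R' _ G'(3)]) (auto simp: labels_def)
  then show "label_seq (map (vertex_transfer F F') G) = map (label_transfer F F') (label_seq G)"
    by (simp add: fG)
  assume i: "1 \<le> i" "i < h"
  show "map (vertex_transfer F F') (flip_op n i G) = flip_op m i (map (vertex_transfer F F') G)"
    unfolding fG unfolding vertex_transfer_def
    by (rule map_inv_into_comp_eq[OF E' verts'[OF flipclass_flip_op[OF F' G'(1) i]] G'(4)[OF i]])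
qed

lemma vertex_transfer_image: "map (vertex_transfer F F') ` F = F'"
proof
  show "map (vertex_transfer F F') ` F \<subseteq> F'" using vertex_transfer_path(1) by blast
  show "F' \<subseteq> map (vertex_transfer F F') ` F"
  proof
    fix G' assume G': "G' \<in> F'"
    obtain G where G: "G \<in> F" "map (vertex_code F') G' = map (vertex_code F) G"
      using flip_type_partner[OF eq[symmetric] G'] by metis
    have "set G' \<subseteq> verts F'" using G' by (auto simp: verts_def)
    then have "map (vertex_transfer F F') G = G'"
      unfolding vertex_transfer_def using flipclass_codes'(1) G(2) by (intro map_inv_into_comp_eq)
    then show "G' \<in> map (vertex_transfer F F') ` F" using G(1) by blast
  qed
qed

lemma flip_iso_vertex_label_transfer:
  "flip_iso n h F m F' (vertex_transfer F F') (label_transfer F F')"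
proof -
  have "inj_on (map (vertex_transfer F F')) F"
  proof (rule inj_onI)
    fix G1 G2 assume G: "G1 \<in> F" "G2 \<in> F" "map (vertex_transfer F F') G1 = map (vertex_transfer F F') G2"
    have "inj_on (vertex_transfer F F') (set G1 \<union> set G2)"
      using bij_betw_vertex_transfer G(1,2)
      by (auto simp: bij_betw_def verts_def intro: inj_on_subset)
    with G(3) show "G1 = G2" using inj_on_map_eq_map by blast
  qed
  then have "bij_betw (map (vertex_transfer F F')) F F'"
    using vertex_transfer_image by (simp add: bij_betw_def)
  then show ?thesis
    unfolding flip_iso_def
    using bij_betw_vertex_transfer bij_betw_label_transfer vertex_transfer_path label_transfer_lex_less
    by blast
qed

end

lemma map_in_bounded_lists:
  fixes E :: "'a \<Rightarrow> nat"
  assumes "bij_betw E V {0..<c}" "c \<le> N" "set xs \<subseteq> V"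
  shows "map E xs \<in> {ys. set ys \<subseteq> {0..<N} \<and> length ys = length xs}"
proof -
  have "E x < N" if "x \<in> set xs" for x
  proof -
    have "E x \<in> {0..<c}" using bij_betw_apply[OF assms(1)] assms(3) that by blast
    then show ?thesis using assms(2) by simp
  qed
  then show ?thesis by auto
qed

lemma finite_flip_types: "finite {flip_type n h F | n F. flipclass n h F}"
proof -
  define N where "N = (4 * h * h) ^ h"
  define A where "A = {xs. set xs \<subseteq> {0..<Suc h * N} \<and> length xs = Suc h}"
  define B where "B = {xs. set xs \<subseteq> {0..<h * N} \<and> length xs = h}"
  define C where "C = {xss. set xss \<subseteq> A \<and> length xss = h - 1}"
  define U where "U = {0..Suc h * N} \<times> {0..h * N} \<times> Pow (A \<times> B \<times> C)"
  have "finite A" "finite B" unfolding A_def B_def by (simp_all add: finite_lists_length_eq)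
  then have "finite C" unfolding C_def by (simp add: finite_lists_length_eq)
  then have "finite U" using \<open>finite A\<close> \<open>finite B\<close> by (simp add: U_def)
  moreover have "flip_type n h F \<in> U" if F: "flipclass n h F" for n F
  proof -
    note V = flipclass_verts_bound[OF F, folded N_def] and L = flipclass_labels_bound[OF F, folded N_def]
    have VA: "map (vertex_code F) G \<in> A" if G: "G \<in> F" for G
      using map_in_bounded_lists[OF flipclass_codes(1)[OF F] conjunct2[OF V], of G] G flipclass_length[OF F G]
      by (auto simp: A_def verts_def)
    have "map (rank_in (labels F)) (label_seq G) \<in> B" if G: "G \<in> F" for G
      using map_in_bounded_lists[OF flipclass_codes(2)[OF F] conjunct2[OF L], of "label_seq G"] G
        flipclass_length[OF F G]
      by (auto simp: B_def labels_def length_label_seq)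
    moreover have "map (\<lambda>i. map (vertex_code F) (flip_op n i G)) [1..<h] \<in> C" if G: "G \<in> F" for G
      using VA flipclass_flip_op[OF F G] by (auto simp: C_def)
    ultimately show ?thesis using V L VA by (auto simp: U_def flip_type_def)
  qed
  ultimately show ?thesis by (auto intro: finite_subset)
qed

theorem corollary6p13:
  fixes h :: nat
  shows "\<exists>S :: (nat \<times> (nat \<Rightarrow> nat) list set) set. finite S \<and>
    (\<forall>n F. 1 \<le> n \<and> flipclass n h F \<longrightarrow>
       (\<exists>(m, F') \<in> S. 1 \<le> m \<and> flipclass m h F' \<and> (\<exists>f g. flip_iso n h F m F' f g)))"
proof -
  define D where "D = {(n, F). 1 \<le> n \<and> flipclass n h F}"
  define class_type where "class_type p = flip_type (fst p) h (snd p)" for p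
  define rep where "rep = inv_into D class_type"
  have "class_type ` D \<subseteq> {flip_type n h F | n F. flipclass n h F}"
    by (fastforce simp: D_def class_type_def)
  then have "finite (rep ` class_type ` D)" using finite_flip_types finite_subset by blast
  moreover have "\<exists>(m, F') \<in> rep ` class_type ` D. 1 \<le> m \<and> flipclass m h F' \<and>
      (\<exists>f g. flip_iso n h F m F' f g)" if "1 \<le> n \<and> flipclass n h F" for n F
  proof -
    have nF: "(n, F) \<in> D" using that by (simp add: D_def)
    obtain m F' where mF': "rep (class_type (n, F)) = (m, F')" by fastforce
    have "(m, F') \<in> D" "class_type (m, F') = class_type (n, F)"
      using inv_into_into f_inv_into_f nF mF' unfolding rep_def by (metis imageI)+
    then have "1 \<le> m \<and> flipclass m h F' \<and> (\<exists>f g. flip_iso n h F m F' f g)"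
      using flip_iso_vertex_label_transfer[of n h F m F'] nF by (auto simp: D_def class_type_def)
    moreover have "(m, F') \<in> rep ` class_type ` D" using nF unfolding mF'[symmetric] by (intro imageI)
    ultimately show ?thesis by blast
  qed
  ultimately show ?thesis by blast
qed

end
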